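(* Let $V\subset\mathbb{R}^d$ be a finite antichain and $p\in S_V$. If $p$ is a syzygy-point, then $p$ is a characteristic point.
   Context: For $x,y\in\mathbb{R}^d$, $x\le y$ (dominance order) means $x_i\le y_i$ for all $i$; $y\rhd x$ means $y_i>x_i$ for all $i$; $y\rhd_i x$ means $y_i=x_i$ and $y_j>x_j$ for all $j\neq i$. $V\subset\mathbb{R}^d$ is a finite antichain in the dominance order. The orthogonal surface $S_V$ is the topological boundary of $\langle V\rangle=\{x: x\ge v\text{ for some }v\in V\}$. Flats: $U_i(v)=\{p\in S_V: p\rhd_i v\}$; for $v,w\in V$ put $v\sim_i w$ iff $U_i(v)\cap U_i(w)\neq\emptyset$, and let $\sim_i^c$ be the reflexive–transitive closure; the $i$-flat of $v$ is $F_i(v)=\overline{\bigcup_{w\sim_i^c v}U_i(w)}$, and an $i$-flat is any set of this form. A characteristic point is a point of $S_V$ that lies in some $i$-flat for every $i\in\{1,\dots,d\}$. For $p\in S_V$ let $\Delta_p$ be the simplicial complex on $\{1,\dots,d\}$ with $I\in\Delta_p$ iff $p+\epsilon\sum_{i\in I}e_i\in S_V$ for some $\epsilon>0$ ($e_i$ the standard unit vectors). $p$ is a syzygy-point if $\Delta_p$ has non-trivial (reduced) homology. *)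

theory Defs
  imports "HOL-Analysis.Analysis"
begin

text \<open>Points of R^d are vectors of type real^'n, d = CARD('n). The index type is
  additionally linearly ordered; the order is only used to orient simplices when
  defining simplicial (reduced) homology, which does not depend on this choice.\<close>

definition dom_le :: "real^'n \<Rightarrow> real^'n \<Rightarrow> bool" where
  "dom_le x y \<longleftrightarrow> (\<forall>i. x$i \<le> y$i)"

definition dom_gt :: "real^'n \<Rightarrow> real^'n \<Rightarrow> bool" where
  "dom_gt y x \<longleftrightarrow> (\<forall>i. y$i > x$i)"

definition dom_gt_i :: "'n \<Rightarrow> real^'n \<Rightarrow> real^'n \<Rightarrow> bool" where
  "dom_gt_i i y x \<longleftrightarrow> y$i = x$i \<and> (\<forall>j. j \<noteq> i \<longrightarrow> y$j > x$j)"

definition antichain_dom :: "(real^'n) set \<Rightarrow> bool" where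
  "antichain_dom V \<longleftrightarrow> (\<forall>v\<in>V. \<forall>w\<in>V. dom_le v w \<longrightarrow> v = w)"

definition generated :: "(real^'n) set \<Rightarrow> (real^'n) set" where
  "generated V = {x. \<exists>v\<in>V. dom_le v x}"

definition orth_surface :: "(real^'n) set \<Rightarrow> (real^'n) set" where
  "orth_surface V = frontier (generated V)"

definition U_flat :: "(real^'n) set \<Rightarrow> 'n \<Rightarrow> real^'n \<Rightarrow> (real^'n) set" where
  "U_flat V i v = {p \<in> orth_surface V. dom_gt_i i p v}"

definition sim_i :: "(real^'n) set \<Rightarrow> 'n \<Rightarrow> real^'n \<Rightarrow> real^'n \<Rightarrow> bool" where
  "sim_i V i v w \<longleftrightarrow> v \<in> V \<and> w \<in> V \<and> U_flat V i v \<inter> U_flat V i w \<noteq> {}"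

definition i_flat_of :: "(real^'n) set \<Rightarrow> 'n \<Rightarrow> real^'n \<Rightarrow> (real^'n) set" where
  "i_flat_of V i v = closure (\<Union> {U_flat V i w | w. w \<in> V \<and> (sim_i V i)\<^sup>*\<^sup>* w v})"

definition is_i_flat :: "(real^'n) set \<Rightarrow> 'n \<Rightarrow> (real^'n) set \<Rightarrow> bool" where
  "is_i_flat V i F \<longleftrightarrow> (\<exists>v\<in>V. F = i_flat_of V i v)"

definition characteristic_point :: "(real^'n) set \<Rightarrow> real^'n \<Rightarrow> bool" where
  "characteristic_point V p \<longleftrightarrow>
     p \<in> orth_surface V \<and> (\<forall>i. \<exists>F. is_i_flat V i F \<and> p \<in> F)"

definition Delta_p :: "(real^'n) set \<Rightarrow> real^'n \<Rightarrow> 'n set set" where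
  "Delta_p V p = {I. \<exists>\<epsilon>>0. p + \<epsilon> *\<^sub>R (\<Sum>i\<in>I. axis i 1) \<in> orth_surface V}"

text \<open>Simplicial chains with integer coefficients: an n-chain assigns an integer to
  each face with n vertices (i.e. dimension n-1); the face with 0 vertices (the empty
  face) gives the augmentation, so the resulting complex computes reduced homology.\<close>

definition sc_chain :: "'n set set \<Rightarrow> nat \<Rightarrow> ('n set \<Rightarrow> int) \<Rightarrow> bool" where
  "sc_chain K n c \<longleftrightarrow> (\<forall>\<sigma>. c \<sigma> \<noteq> 0 \<longrightarrow> \<sigma> \<in> K \<and> card \<sigma> = n)"

definition sc_boundary :: "('n::{finite,linorder} set \<Rightarrow> int) \<Rightarrow> 'n set \<Rightarrow> int" where
  "sc_boundary c \<sigma> = (\<Sum>j\<in>UNIV - \<sigma>. (-1) ^ card {i\<in>\<sigma>. i < j} * c (insert j \<sigma>))"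

definition nontrivial_reduced_homology :: "'n::{finite,linorder} set set \<Rightarrow> bool" where
  "nontrivial_reduced_homology K \<longleftrightarrow>
     (\<exists>n c. sc_chain K n c \<and> sc_boundary c = (\<lambda>_. 0) \<and>
            \<not> (\<exists>b. sc_chain K (Suc n) b \<and> sc_boundary b = c))"

definition syzygy_point :: "(real^('n::{finite,linorder})) set \<Rightarrow> real^('n::{finite,linorder}) \<Rightarrow> bool" where
  "syzygy_point V p \<longleftrightarrow> p \<in> orth_surface V \<and> nontrivial_reduced_homology (Delta_p V p)"

end

theory Submission
  imports Defs
begin

(* If p lies in no i-flat, then Delta_p is a cone with apex i, hence acyclic: adding the apex
   is a contracting chain homotopy. For the cone property, write e_I for the sum of the unit
   vectors e_k, k in I, let p + eps e_I lie on S_V and choose 0 < d <= eps so small that no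
   generator has a coordinate strictly between p_k and p_k + d. If p + d e_(I+i) left S_V, some
   v in V would lie strictly below it; then v <= p, v_k < p_k off I+i, and v_i = p_i because
   p + d e_I is still on S_V. So the points p + t e_I, 0 < t <= d, lie in U_i(v) and converge
   to p, which puts p in the i-flat of v. *)

definition sc_sign :: "'n::linorder \<Rightarrow> 'n set \<Rightarrow> int" where
  "sc_sign j s = (-1) ^ card {k\<in>s. k < j}"

definition sc_cone :: "'n::{finite,linorder} \<Rightarrow> ('n set \<Rightarrow> int) \<Rightarrow> 'n set \<Rightarrow> int" where
  "sc_cone i c s = (if i \<in> s then sc_sign i s * c (s - {i}) else 0)"

lemma sc_sign_sq [simp]: "sc_sign j s * sc_sign j s = 1"
  by (simp add: sc_sign_def power_add[symmetric])

lemma sc_sign_insert: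
  fixes s :: "'n::{finite,linorder} set"
  shows "sc_sign j (insert i s) = (if i < j \<and> i \<notin> s then - sc_sign j s else sc_sign j s)"
proof -
  have "{k \<in> insert i s. k < j} = (if i < j then insert i {k\<in>s. k < j} else {k\<in>s. k < j})"
    by auto
  then show ?thesis
    by (cases "i \<in> s") (simp_all add: sc_sign_def insert_absorb)
qed

lemma sc_sign_insert_swap:
  fixes t :: "'n::{finite,linorder} set"
  assumes "i \<notin> t" "j \<notin> t" "i \<noteq> j"
  shows "sc_sign j (insert i t) * sc_sign i (insert j t) = - (sc_sign i t * sc_sign j t)"
  using assms by (cases "i < j") (auto simp: sc_sign_insert)

lemma sc_boundary_altdef: "sc_boundary c s = (\<Sum>j\<in>UNIV - s. sc_sign j s * c (insert j s))"
  by (simp add: sc_boundary_def sc_sign_def)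

lemma sc_cone_homotopy:
  fixes c :: "'n::{finite,linorder} set \<Rightarrow> int"
  shows "sc_boundary (sc_cone i c) s + sc_cone i (sc_boundary c) s = c s"
proof (cases "i \<in> s")
  case False
  have "sc_boundary (sc_cone i c) s = sc_sign i s * sc_cone i c (insert i s)
      + (\<Sum>j\<in>(UNIV - s) - {i}. sc_sign j s * sc_cone i c (insert j s))"
    unfolding sc_boundary_altdef using False by (subst sum.remove[of _ i]) auto
  also have "(\<Sum>j\<in>(UNIV - s) - {i}. sc_sign j s * sc_cone i c (insert j s)) = 0"
    using False by (intro sum.neutral) (auto simp: sc_cone_def)
  also have "sc_sign i s * sc_cone i c (insert i s) = c s"
    using False by (simp add: sc_cone_def sc_sign_insert mult.assoc[symmetric])
  moreover have "sc_cone i (sc_boundary c) s = 0"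
    using False by (simp add: sc_cone_def)
  ultimately show ?thesis
    by simp
next
  case True
  define t where "t = s - {i}"
  have s: "s = insert i t" and i: "i \<notin> t"
    using True by (auto simp: t_def)
  have cone_part: "sc_boundary (sc_cone i c) s
      = - (sc_sign i t * (\<Sum>j\<in>UNIV - s. sc_sign j t * c (insert j t)))"
    unfolding sc_boundary_altdef sum_distrib_left sum_negf[symmetric]
  proof (rule sum.cong)
    fix j assume "j \<in> UNIV - s"
    then have "insert j s - {i} = insert j t" "sc_sign i (insert j s) = sc_sign i (insert j t)"
      and "j \<notin> t" "i \<noteq> j"
      using s i by (auto simp: insert_commute sc_sign_insert)
    then show "sc_sign j s * sc_cone i c (insert j s)
        = - (sc_sign i t * (sc_sign j t * c (insert j t)))"
      using s i sc_sign_insert_swap[of i t j] by (simp add: sc_cone_def mult.assoc[symmetric])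
  qed simp
  have "UNIV - t = insert i (UNIV - s)" "i \<notin> UNIV - s"
    using s i by auto
  then have "sc_boundary c t = sc_sign i t * c s + (\<Sum>j\<in>UNIV - s. sc_sign j t * c (insert j t))"
    unfolding sc_boundary_altdef using s by simp
  moreover have "sc_cone i (sc_boundary c) s = sc_sign i t * sc_boundary c t"
    using s i by (simp add: sc_cone_def sc_sign_insert)
  ultimately show ?thesis
    using cone_part by (simp add: distrib_left mult.assoc[symmetric])
qed

lemma sc_chain_sc_cone:
  assumes cone: "\<And>I. I \<in> K \<Longrightarrow> insert i I \<in> K" and c: "sc_chain K n c"
  shows "sc_chain K (Suc n) (sc_cone i c)"
  unfolding sc_chain_def
proof (intro allI impI)
  fix s assume "sc_cone i c s \<noteq> 0"
  then have i: "i \<in> s" and "c (s - {i}) \<noteq> 0"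
    by (auto simp: sc_cone_def split: if_splits)
  then have "s - {i} \<in> K" "card (s - {i}) = n"
    using c by (auto simp: sc_chain_def)
  moreover have "insert i (s - {i}) = s"
    using i by auto
  ultimately show "s \<in> K \<and> card s = Suc n"
    using cone[of "s - {i}"] i by (metis card_Suc_Diff1 finite)
qed

lemma cone_not_nontrivial_reduced_homology:
  fixes K :: "'n::{finite,linorder} set set"
  assumes cone: "\<And>I. I \<in> K \<Longrightarrow> insert i I \<in> K"
  shows "\<not> nontrivial_reduced_homology K"
proof -
  have "sc_cone i (\<lambda>_. 0) = (\<lambda>_. 0)"
    by (simp add: sc_cone_def fun_eq_iff)
  then have "sc_boundary (sc_cone i c) = c" if "sc_boundary c = (\<lambda>_. 0)" for c :: "'n set \<Rightarrow> int"
    using sc_cone_homotopy[of i c] that by (simp add: fun_eq_iff)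
  then show ?thesis
    unfolding nontrivial_reduced_homology_def using sc_chain_sc_cone[OF cone] by blast
qed

lemma dom_le_trans: "dom_le x y \<Longrightarrow> dom_le y z \<Longrightarrow> dom_le x z"
  unfolding dom_le_def by (meson order_trans)

lemma dom_gt_le_trans: "dom_gt y x \<Longrightarrow> dom_le y z \<Longrightarrow> dom_gt z x"
  unfolding dom_le_def dom_gt_def by (meson less_le_trans)

lemma closed_generated:
  fixes V :: "(real^'n) set"
  assumes "finite V"
  shows "closed (generated V)"
proof -
  have "closed (\<Union>v\<in>V. \<Inter>k. {x::real^'n. v$k \<le> x$k})"
    using assms by (intro closed_UN closed_INT ballI closed_Collect_le continuous_intros) auto
  moreover have "generated V = (\<Union>v\<in>V. \<Inter>k. {x. v$k \<le> x$k})"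
    unfolding generated_def dom_le_def by auto
  ultimately show ?thesis
    by simp
qed

lemma interior_generated:
  fixes V :: "(real^'n) set"
  shows "interior (generated V) = {x. \<exists>v\<in>V. dom_gt x v}"
proof (intro equalityI subsetI)
  fix x assume "x \<in> {x. \<exists>v\<in>V. dom_gt x v}"
  then obtain v where v: "v \<in> V" "dom_gt x v"
    by auto
  have "open (\<Inter>k. {y. v$k < y$k})"
    by (intro open_INT ballI open_Collect_less continuous_intros) auto
  moreover have "(\<Inter>k. {y. v$k < y$k}) \<subseteq> generated V"
    using v(1) unfolding generated_def dom_le_def by (auto intro: less_imp_le)
  moreover have "x \<in> (\<Inter>k. {y. v$k < y$k})"
    using v(2) unfolding dom_gt_def by auto
  ultimately show "x \<in> interior (generated V)"
    by (meson interior_maximal subsetD)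
next
  fix x assume x: "x \<in> interior (generated V)"
  define one :: "real^'n" where "one = (\<chi> k. 1)"
  have "((\<lambda>t. x - t *\<^sub>R one) \<longlongrightarrow> x) (at_right 0)"
    by (auto intro!: tendsto_eq_intros)
  then have "\<forall>\<^sub>F t in at_right 0. x - t *\<^sub>R one \<in> interior (generated V)"
    using x by (intro topological_tendstoD) auto
  then have "\<forall>\<^sub>F t in at_right 0. 0 < t \<and> x - t *\<^sub>R one \<in> generated V"
    using eventually_at_right_less[of 0] by eventually_elim (use interior_subset in blast)
  then obtain t v where "0 < t" "v \<in> V" "dom_le v (x - t *\<^sub>R one)"
    unfolding generated_def using eventually_happens'[OF trivial_limit_at_right_real] by blast
  then have "dom_gt x v"
    unfolding dom_le_def dom_gt_def one_def by (auto intro: le_less_trans)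
  then show "x \<in> {x. \<exists>v\<in>V. dom_gt x v}"
    using \<open>v \<in> V\<close> by auto
qed

lemma orth_surface_iff:
  assumes "finite V"
  shows "x \<in> orth_surface V \<longleftrightarrow> (\<exists>v\<in>V. dom_le v x) \<and> \<not> (\<exists>v\<in>V. dom_gt x v)"
  unfolding orth_surface_def frontier_def closure_closed[OF closed_generated[OF assms]]
    interior_generated
  by (auto simp: generated_def)

lemma dom_gt_if_above_orth_surface:
  assumes "finite V" "x \<in> orth_surface V" "dom_le x y" "y \<notin> orth_surface V"
  shows "\<exists>v\<in>V. dom_gt y v"
  using assms orth_surface_iff[OF \<open>finite V\<close>] by (meson dom_le_trans)

lemma orth_surface_order_convex:
  assumes "finite V" "x \<in> orth_surface V" "z \<in> orth_surface V" "dom_le x y" "dom_le y z"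
  shows "y \<in> orth_surface V"
  using assms orth_surface_iff[OF \<open>finite V\<close>] by (meson dom_le_trans dom_gt_le_trans)

lemma ray_component:
  "(p + t *\<^sub>R (\<Sum>i\<in>I. axis i 1)) $ k = p$k + (if k \<in> I then t else 0)"
  by (simp add: axis_def)

lemma closure_U_flat_subset_i_flat_of:
  assumes "v \<in> V"
  shows "closure (U_flat V i v) \<subseteq> i_flat_of V i v"
  unfolding i_flat_of_def using assms by (intro closure_mono) blast

lemma eventually_no_coordinate_in_gap:
  fixes V :: "(real^'n) set"
  assumes "finite V"
  shows "\<forall>\<^sub>F d in at_right 0. \<forall>v\<in>V. \<forall>k. v$k < p$k + d \<longrightarrow> v$k \<le> p$k"
proof (intro eventually_ball_finite[OF assms] ballI eventually_all_finite)
  fix v :: "real^'n" and k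
  show "\<forall>\<^sub>F d in at_right 0. v$k < p$k + d \<longrightarrow> v$k \<le> p$k"
  proof (cases "v$k \<le> p$k")
    case False
    then show ?thesis
      by (intro eventually_at_rightI[where b = "v$k - p$k"]) auto
  qed simp
qed

lemma Delta_p_insert_if_not_in_i_flat:
  fixes V :: "(real^'n) set"
  assumes fin: "finite V" and p: "p \<in> orth_surface V"
    and not_flat: "\<And>F. is_i_flat V i F \<Longrightarrow> p \<notin> F"
    and I: "I \<in> Delta_p V p"
  shows "insert i I \<in> Delta_p V p"
proof (cases "i \<in> I")
  case True
  then show ?thesis
    using I by (simp add: insert_absorb)
next
  case i: False
  let ?w = "\<lambda>J. (\<Sum>k\<in>J. axis k (1::real)) :: real^'n"
  obtain \<epsilon> where "\<epsilon> > 0" and \<epsilon>: "p + \<epsilon> *\<^sub>R ?w I \<in> orth_surface V"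
    using I unfolding Delta_p_def by blast
  have ray: "p + t *\<^sub>R ?w I \<in> orth_surface V" if "0 \<le> t" "t \<le> \<epsilon>" for t
    by (rule orth_surface_order_convex[OF fin p \<epsilon>]) (use that in \<open>unfold dom_le_def ray_component, auto\<close>)
  have "\<forall>\<^sub>F d in at_right 0. d \<le> \<epsilon>"
    using \<open>\<epsilon> > 0\<close> by (intro eventually_at_rightI[where b = \<epsilon>]) auto
  then have "\<forall>\<^sub>F d in at_right 0. 0 < d \<and> d \<le> \<epsilon> \<and> (\<forall>v\<in>V. \<forall>k. v$k < p$k + d \<longrightarrow> v$k \<le> p$k)"
    using eventually_at_right_less[of 0] eventually_no_coordinate_in_gap[OF fin, of p]
    by eventually_elim auto
  then obtain d where d: "0 < d" "d \<le> \<epsilon>"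
    and gap: "\<And>v k. v \<in> V \<Longrightarrow> v$k < p$k + d \<Longrightarrow> v$k \<le> p$k"
    using eventually_happens'[OF trivial_limit_at_right_real] by blast
  have "p + d *\<^sub>R ?w (insert i I) \<in> orth_surface V"
  proof (rule ccontr)
    assume "p + d *\<^sub>R ?w (insert i I) \<notin> orth_surface V"
    moreover have "dom_le p (p + d *\<^sub>R ?w (insert i I))"
      using d unfolding dom_le_def ray_component by simp
    ultimately obtain v where "v \<in> V" and v: "dom_gt (p + d *\<^sub>R ?w (insert i I)) v"
      using dom_gt_if_above_orth_surface[OF fin p] by blast
    have v_lt: "v$k < p$k + (if k \<in> insert i I then d else 0)" for k
      using v unfolding dom_gt_def by (simp only: ray_component)
    have below: "v$k \<le> p$k" for k
      using v_lt[of k] gap[OF \<open>v \<in> V\<close>, of k] d by (auto split: if_splits)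
    have "\<not> dom_gt (p + d *\<^sub>R ?w I) v"
      using ray[of d] d \<open>v \<in> V\<close> orth_surface_iff[OF fin] by auto
    then obtain k where k: "p$k + (if k \<in> I then d else 0) \<le> v$k"
      unfolding dom_gt_def by (auto simp only: ray_component not_all not_less)
    then have "k = i"
      using v_lt[of k] below[of k] d by (auto split: if_splits)
    then have vi: "v$i = p$i"
      using k below[of i] i by simp
    have "p + t *\<^sub>R ?w I \<in> U_flat V i v" if "0 < t" "t \<le> d" for t
    proof -
      have "p$j + (if j \<in> I then t else 0) > v$j" if "j \<noteq> i" for j
        using v_lt[of j] below[of j] \<open>0 < t\<close> that by (auto split: if_splits)
      then show ?thesis
        using ray[of t] that d vi i unfolding U_flat_def mem_Collect_eq dom_gt_i_def ray_component by auto
    qed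
    then have "\<forall>\<^sub>F t in at_right 0. p + t *\<^sub>R ?w I \<in> U_flat V i v"
      using d by (intro eventually_at_rightI[where b = d]) auto
    moreover have "((\<lambda>t. p + t *\<^sub>R ?w I) \<longlongrightarrow> p) (at_right 0)"
      by (auto intro!: tendsto_eq_intros)
    ultimately have "p \<in> closure (U_flat V i v)"
      by (intro Lim_in_closed_set) (auto elim: eventually_mono intro: closure_subset[THEN subsetD])
    then show False
      using closure_U_flat_subset_i_flat_of[OF \<open>v \<in> V\<close>] not_flat \<open>v \<in> V\<close>
      by (auto simp: is_i_flat_def)
  qed
  then show ?thesis
    using d unfolding Delta_p_def by blast
qed

theorem lemma4p10:
  fixes V :: "(real^('n::{finite,linorder})) set" and p :: "real^('n::{finite,linorder})"
  assumes "finite V" and "antichain_dom V" and "p \<in> orth_surface V"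
    and "syzygy_point V p"
  shows "characteristic_point V p"
  unfolding characteristic_point_def
proof (intro conjI allI)
  show "p \<in> orth_surface V"
    by fact
  fix i
  show "\<exists>F. is_i_flat V i F \<and> p \<in> F"
  proof (rule ccontr)
    assume "\<nexists>F. is_i_flat V i F \<and> p \<in> F"
    then have "\<And>I. I \<in> Delta_p V p \<Longrightarrow> insert i I \<in> Delta_p V p"
      using Delta_p_insert_if_not_in_i_flat[OF assms(1,3)] by blast
    then have "\<not> nontrivial_reduced_homology (Delta_p V p)"
      by (rule cone_not_nontrivial_reduced_homology)
    then show False
      using assms(4) unfolding syzygy_point_def by blast
  qed
qed

end
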